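(* Let $m\ge2$. The problem $-\psi''+Q\psi=0$ on $\Omega$, $\psi\in H^2(\Omega)\cap K(\Omega)$, admits $m$ linearly independent solutions if and only if at least $m+1$ of the $n$ problems \[ -z''+Qz=0\ \text{on}\ \omega_i,\qquad z(a)=0,\qquad \frac{\mathrm dz}{\mathrm d\omega_i}(a_i)=0,\qquad i=1,\dots,n, \] have nontrivial solutions.
   Context: $\Omega$ is a compact star graph with $n$ edges $\omega_i=[0,a_i]$, $a_i>0$, joined at a central vertex $a$ (corresponding to $0$); $a_i$ also denotes the free endpoint of $\omega_i$. Functions on $\Omega$ are tuples $(\psi_{\omega_1},\dots,\psi_{\omega_n})$, $H^2(\Omega)=\bigoplus_iH^2(0,a_i)$, $\frac{\mathrm dz}{\mathrm d\omega_i}(a_i):=z'_{\omega_i}(a_i)$, and on a single edge $z(a)$ means $z_{\omega_i}(0)$. $K(\Omega)$ is the set of functions satisfying the Kirchhoff conditions at $a$ ($\psi_{\omega_1}(0)=\dots=\psi_{\omega_n}(0)$, $\sum_i\psi'_{\omega_i}(0)=0$) and the Neumann conditions $\psi'_{\omega_j}(a_j)=0$ at every endpoint. $Q\in L^\infty(\Omega)$ is real-valued. *)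

theory Defs
  imports "HOL-Analysis.Analysis"
begin

text \<open>A function psi on it lies in H^2(0,a) iff it is C^1
  with derivative d, and d is absolutely continuous with a square integrable derivative g,
  i.e. d x = d 0 + integral of g over [0,x].\<close>

definition H2_edge :: "real \<Rightarrow> (real \<Rightarrow> real) \<Rightarrow> (real \<Rightarrow> real) \<Rightarrow> (real \<Rightarrow> real) \<Rightarrow> bool" where
  "H2_edge a psi d g \<longleftrightarrow>
     (\<forall>x\<in>{0..a}. (psi has_real_derivative d x) (at x within {0..a})) \<and>
     g absolutely_integrable_on {0..a} \<and>
     (\<lambda>x. (g x)\<^sup>2) integrable_on {0..a} \<and>
     (\<forall>x\<in>{0..a}. d x = d 0 + integral {0..x} g)"

definition edge_sol :: "(real \<Rightarrow> real) \<Rightarrow> real \<Rightarrow> (real \<Rightarrow> real) \<Rightarrow> (real \<Rightarrow> real) \<Rightarrow> bool" where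
  "edge_sol q a psi d \<longleftrightarrow>
     (\<exists>g. H2_edge a psi d g \<and> (AE x in lebesgue. x \<in> {0..a} \<longrightarrow> - g x + q x * psi x = 0))"

text \<open>Solutions on the star graph: psi i is the component on edge i (i < n), with derivative d i;
  H^2 on every edge, the equation on every edge, Kirchhoff conditions at the centre
  (corresponding to 0 on every edge) and Neumann conditions at the free endpoints a i.\<close>

definition graph_sol :: "nat \<Rightarrow> (nat \<Rightarrow> real) \<Rightarrow> (nat \<Rightarrow> real \<Rightarrow> real) \<Rightarrow> (nat \<Rightarrow> real \<Rightarrow> real) \<Rightarrow> bool" where
  "graph_sol n a Q psi \<longleftrightarrow>
     (\<exists>d. (\<forall>i<n. edge_sol (Q i) (a i) (psi i) (d i)) \<and>
          (\<forall>i<n. \<forall>j<n. psi i 0 = psi j 0) \<and>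
          (\<Sum>i<n. d i 0) = 0 \<and>
          (\<forall>i<n. d i (a i) = 0))"

definition graph_lin_indep :: "nat \<Rightarrow> (nat \<Rightarrow> real) \<Rightarrow> nat \<Rightarrow> (nat \<Rightarrow> nat \<Rightarrow> real \<Rightarrow> real) \<Rightarrow> bool" where
  "graph_lin_indep n a m phi \<longleftrightarrow>
     (\<forall>c :: nat \<Rightarrow> real.
        (\<forall>i<n. \<forall>x\<in>{0..a i}. (\<Sum>k<m. c k * phi k i x) = 0) \<longrightarrow> (\<forall>k<m. c k = 0))"

definition edge_dirichlet_neumann_nontrivial :: "(real \<Rightarrow> real) \<Rightarrow> real \<Rightarrow> bool" where
  "edge_dirichlet_neumann_nontrivial q a \<longleftrightarrow>
     (\<exists>z dz. edge_sol q a z dz \<and> z 0 = 0 \<and> dz a = 0 \<and> (\<exists>x\<in>{0..a}. z x \<noteq> 0))"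

end

theory Submission
  imports Defs
begin

text \<open>On each edge the equation is a linear ODE with bounded coefficient, so a solution is
  determined by its value and derivative at any single point.  Hence a solution on the star vanishes
  once its value and all edge derivatives at the centre vanish.  On an edge whose
  Dirichlet-Neumann problem is trivial a vanishing centre value already forces a vanishing
  derivative there, and if some edge i0 carries a nontrivial Dirichlet-Neumann solution z, then
  z(a) psi - psi(a) z has zero Cauchy data at the free end of i0, so every solution vanishes at the
  centre.  With at most m such edges, fewer than m linear conditions (the centre value, resp. the
  derivatives on all but one of these edges, the last one following from the Kirchhoff sum) single
  out a nontrivial combination of m solutions, which must then vanish identically.  Conversely,
  m + 1 such edges e0, ..., em with normalised solutions give the m independent solutions
  z_(e_k) - z_(e_m).\<close>

lemma has_integral_bound_AE_real:
  fixes f :: "real \<Rightarrow> real"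
  assumes "0 \<le> B" "u \<le> v" and f: "(f has_integral i) {u..v}"
    and bound: "AE x in lebesgue. x \<in> {u..v} \<longrightarrow> \<bar>f x\<bar> \<le> B"
  shows "\<bar>i\<bar> \<le> B * (v - u)"
proof -
  from bound obtain N where N: "{x \<in> space lebesgue. \<not> (x \<in> {u..v} \<longrightarrow> \<bar>f x\<bar> \<le> B)} \<subseteq> N"
      "emeasure lebesgue N = 0" "N \<in> sets lebesgue"
    by (rule AE_E)
  define f' where "f' x = (if x \<in> N then 0 else f x)" for x
  have "negligible N"
    using N(2,3) by (simp add: negligible_iff_null_sets null_setsI)
  then have f': "(f' has_integral i) {u..v}"
    by (rule has_integral_spike[OF _ _ f]) (auto simp: f'_def)
  have "norm i \<le> B * Henstock_Kurzweil_Integration.content {u..v}"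
    by (rule has_integral_bound_real[where S = "{}", OF \<open>0 \<le> B\<close> _ f'])
      (use assms N(1) in \<open>auto simp: f'_def\<close>)
  then show ?thesis
    using \<open>u \<le> v\<close> by simp
qed

lemma homogeneous_system_nontrivial_solution:
  fixes F :: "('a \<Rightarrow> 'b::field) set"
  assumes "finite F" "finite K" "card F < card K"
  shows "\<exists>c. (\<exists>k\<in>K. c k \<noteq> 0) \<and> (\<forall>k. k \<notin> K \<longrightarrow> c k = 0) \<and> (\<forall>f\<in>F. (\<Sum>k\<in>K. c k * f k) = 0)"
  using assms
proof (induction F arbitrary: K rule: finite_induct)
  case empty
  then obtain k where "k \<in> K"
    by fastforce
  then show ?case
    by (intro exI[of _ "\<lambda>l. if l \<in> K then 1 else 0"]) auto
next
  case (insert f F)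
  let ?ip = "\<lambda>c h. \<Sum>k\<in>K. c k * h k"
  have remove: "\<exists>c. (\<exists>k\<in>K. c k \<noteq> 0) \<and> c j = 0 \<and> (\<forall>k. k \<notin> K \<longrightarrow> c k = 0) \<and> (\<forall>h\<in>F. ?ip c h = 0)"
    if "j \<in> K" for j
  proof -
    have "card F < card (K - {j})"
      using insert.hyps insert.prems that by simp
    then obtain c where c: "\<exists>k\<in>K - {j}. c k \<noteq> 0" "\<forall>k. k \<notin> K - {j} \<longrightarrow> c k = 0"
        "\<forall>h\<in>F. (\<Sum>k\<in>K - {j}. c k * h k) = 0"
      using insert.IH insert.prems(1) by blast
    have "c j = 0"
      using c(2) by simp
    then have ip_eq: "?ip c h = (\<Sum>k\<in>K - {j}. c k * h k)" for h
      using sum.remove[OF insert.prems(1) that, of "\<lambda>k. c k * h k"] by simp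
    show ?thesis
      using c \<open>c j = 0\<close> by (intro exI[of _ c] conjI) (auto simp: ip_eq)
  qed
  have "K \<noteq> {}"
    using insert.prems by auto
  then obtain c1 j where c1: "j \<in> K" "c1 j \<noteq> 0" "\<forall>k. k \<notin> K \<longrightarrow> c1 k = 0" "\<forall>h\<in>F. ?ip c1 h = 0"
    using remove by blast
  obtain c2 where c2: "\<exists>k\<in>K. c2 k \<noteq> 0" "c2 j = 0" "\<forall>k. k \<notin> K \<longrightarrow> c2 k = 0" "\<forall>h\<in>F. ?ip c2 h = 0"
    using remove[OF c1(1)] by blast
  \<comment> \<open>c2 vanishes at j where c1 does not, so the combination c below is nonzero.\<close>
  define \<alpha> \<beta> where "\<alpha> = ?ip c2 f" and "\<beta> = ?ip c1 f"
  define c where "c k = \<alpha> * c1 k - \<beta> * c2 k" for k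
  have ip_c: "?ip c h = \<alpha> * ?ip c1 h - \<beta> * ?ip c2 h" for h
    by (simp add: c_def left_diff_distrib sum_subtractf sum_distrib_left mult.assoc)
  consider "\<beta> = 0" | "\<alpha> = 0" | "\<alpha> \<noteq> 0"
    by blast
  then show ?case
  proof cases
    case 1
    then show ?thesis
      using c1 by (intro exI[of _ c1]) (auto simp: \<beta>_def)
  next
    case 2
    then show ?thesis
      using c2 by (intro exI[of _ c2]) (auto simp: \<alpha>_def)
  next
    case 3
    have "c j \<noteq> 0"
      using 3 c1(2) c2(2) by (simp add: c_def)
    moreover have "\<forall>k. k \<notin> K \<longrightarrow> c k = 0"
      using c1(3) c2(3) by (simp add: c_def)
    moreover have "\<forall>h\<in>insert f F. ?ip c h = 0"
      using c1(4) c2(4) by (simp add: ip_c flip: \<alpha>_def \<beta>_def)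
    ultimately show ?thesis
      using c1(1) by blast
  qed
qed

lemma H2_edge_integrable_on:
  assumes "H2_edge a psi d g" "{u..v} \<subseteq> {0..a}"
  shows "g integrable_on {u..v}"
proof -
  have "g integrable_on {0..a}"
    using assms(1) by (simp add: H2_edge_def absolutely_integrable_on_def)
  then show ?thesis
    using assms(2) by (rule integrable_subinterval_real)
qed

lemma H2_edge_cmult:
  assumes "H2_edge a psi d g"
  shows "H2_edge a (\<lambda>x. c * psi x) (\<lambda>x. c * d x) (\<lambda>x. c * g x)"
proof -
  have D: "\<forall>x\<in>{0..a}. (psi has_real_derivative d x) (at x within {0..a})"
    and G: "g absolutely_integrable_on {0..a}" "(\<lambda>x. (g x)\<^sup>2) integrable_on {0..a}"
    and F: "\<forall>x\<in>{0..a}. d x = d 0 + integral {0..x} g"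
    using assms unfolding H2_edge_def by blast+
  have "\<forall>x\<in>{0..a}. ((\<lambda>x. c * psi x) has_real_derivative c * d x) (at x within {0..a})"
    using D by (auto intro: DERIV_cmult)
  moreover have "(\<lambda>x. c * g x) absolutely_integrable_on {0..a}"
    using absolutely_integrable_scaleR_left[OF G(1), of c] by simp
  moreover have "(\<lambda>x. (c * g x)\<^sup>2) integrable_on {0..a}"
    using integrable_on_mult_right[OF G(2), of "c\<^sup>2"] by (simp add: power_mult_distrib)
  moreover have "\<forall>x\<in>{0..a}. c * d x = c * d 0 + integral {0..x} (\<lambda>x. c * g x)"
    using F by (metis distrib_left integral_mult_right)
  ultimately show ?thesis
    unfolding H2_edge_def by blast
qed

lemma H2_edge_add:
  assumes H1: "H2_edge a psi1 d1 g1" and H2: "H2_edge a psi2 d2 g2"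
  shows "H2_edge a (\<lambda>x. psi1 x + psi2 x) (\<lambda>x. d1 x + d2 x) (\<lambda>x. g1 x + g2 x)"
proof -
  have D: "\<forall>x\<in>{0..a}. (psi1 has_real_derivative d1 x) (at x within {0..a})"
      "\<forall>x\<in>{0..a}. (psi2 has_real_derivative d2 x) (at x within {0..a})"
    and G: "g1 absolutely_integrable_on {0..a}" "g2 absolutely_integrable_on {0..a}"
    and G2: "(\<lambda>x. (g1 x)\<^sup>2) integrable_on {0..a}" "(\<lambda>x. (g2 x)\<^sup>2) integrable_on {0..a}"
    and F: "\<forall>x\<in>{0..a}. d1 x = d1 0 + integral {0..x} g1" "\<forall>x\<in>{0..a}. d2 x = d2 0 + integral {0..x} g2"
    using assms unfolding H2_edge_def by blast+
  have "\<forall>x\<in>{0..a}. ((\<lambda>x. psi1 x + psi2 x) has_real_derivative d1 x + d2 x) (at x within {0..a})"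
    using D by (auto intro: DERIV_add)
  moreover have "(\<lambda>x. g1 x + g2 x) absolutely_integrable_on {0..a}"
    using set_integral_add(1)[OF G] .
  moreover have "(\<lambda>x. (g1 x + g2 x)\<^sup>2) integrable_on {0..a}"
  proof (rule measurable_bounded_by_integrable_imp_integrable_real)
    show "(\<lambda>x. (g1 x + g2 x)\<^sup>2) \<in> borel_measurable (lebesgue_on {0..a})"
      using G by (intro borel_measurable_power borel_measurable_add integrable_imp_measurable
          set_lebesgue_integral_eq_integral(1))
    show "(\<lambda>x. 2 * (g1 x)\<^sup>2 + 2 * (g2 x)\<^sup>2) integrable_on {0..a}"
      using G2 by (intro integrable_add integrable_on_mult_right)
    show "\<bar>(g1 x + g2 x)\<^sup>2\<bar> \<le> 2 * (g1 x)\<^sup>2 + 2 * (g2 x)\<^sup>2" for x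
    proof -
      have "(g1 x + g2 x)\<^sup>2 \<le> 2 * (g1 x)\<^sup>2 + 2 * (g2 x)\<^sup>2"
        using zero_le_power2[of "g1 x - g2 x"] unfolding power2_sum power2_diff by linarith
      then show ?thesis
        by simp
    qed
  qed auto
  moreover have "\<forall>x\<in>{0..a}. d1 x + d2 x = d1 0 + d2 0 + integral {0..x} (\<lambda>x. g1 x + g2 x)"
  proof
    fix x assume "x \<in> {0..a}"
    then have "g1 integrable_on {0..x}" "g2 integrable_on {0..x}"
      using H2_edge_integrable_on[OF H1] H2_edge_integrable_on[OF H2] by auto
    with F \<open>x \<in> {0..a}\<close> show "d1 x + d2 x = d1 0 + d2 0 + integral {0..x} (\<lambda>x. g1 x + g2 x)"
      by (simp only: integral_add)
  qed
  ultimately show ?thesis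
    unfolding H2_edge_def by blast
qed

lemma H2_edge_has_derivative:
  "H2_edge a psi d g \<Longrightarrow> x \<in> {0..a} \<Longrightarrow> (psi has_real_derivative d x) (at x within {0..a})"
  unfolding H2_edge_def by blast

lemma H2_edge_deriv_eq:
  "H2_edge a psi d g \<Longrightarrow> x \<in> {0..a} \<Longrightarrow> d x = d 0 + integral {0..x} g"
  unfolding H2_edge_def by blast

lemma H2_edge_deriv_has_integral:
  assumes H: "H2_edge a psi d g" and uv: "0 \<le> u" "u \<le> v" "v \<le> a"
  shows "(g has_integral d v - d u) {u..v}"
proof -
  have "integral {0..u} g + integral {u..v} g = integral {0..v} g"
    using uv H2_edge_integrable_on[OF H, of 0 v] by (intro Henstock_Kurzweil_Integration.integral_combine) auto
  moreover have "d v = d 0 + integral {0..v} g" "d u = d 0 + integral {0..u} g"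
    using uv by (auto intro!: H2_edge_deriv_eq[OF H])
  ultimately have "integral {u..v} g = d v - d u"
    by linarith
  moreover have "g integrable_on {u..v}"
    using uv by (intro H2_edge_integrable_on[OF H]) auto
  ultimately show ?thesis
    using integrable_integral by metis
qed

lemma H2_edge_has_integral:
  assumes H: "H2_edge a psi d g" and uv: "0 \<le> u" "u \<le> v" "v \<le> a"
  shows "(d has_integral psi v - psi u) {u..v}"
proof (rule fundamental_theorem_of_calculus[OF \<open>u \<le> v\<close>])
  fix x assume "x \<in> {u..v}"
  then have "(psi has_vector_derivative d x) (at x within {0..a})"
    using uv H2_edge_has_derivative[OF H] by (simp add: has_real_derivative_iff_has_vector_derivative)
  then show "(psi has_vector_derivative d x) (at x within {u..v})"
    by (rule has_vector_derivative_within_subset) (use uv in auto)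
qed

lemma H2_edge_continuous_on:
  assumes H: "H2_edge a psi d g"
  shows "continuous_on {0..a} psi" "continuous_on {0..a} d"
proof -
  show "continuous_on {0..a} psi"
    using H2_edge_has_derivative[OF H] by (rule DERIV_continuous_on)
  have "continuous_on {0..a} (\<lambda>x. d 0 + integral {0..x} g)"
    using H2_edge_integrable_on[OF H order.refl]
    by (intro continuous_intros indefinite_integral_continuous_1)
  then show "continuous_on {0..a} d"
    by (rule continuous_on_eq) (use H2_edge_deriv_eq[OF H] in metis)
qed

lemma H2_edge_increment_bound:
  assumes H: "H2_edge a psi d g" and "0 \<le> B"
    and g_bound: "AE x in lebesgue. x \<in> {0..a} \<longrightarrow> \<bar>g x\<bar> \<le> B * \<bar>psi x\<bar>"
    and uv: "0 \<le> u" "u \<le> v" "v \<le> a" and M: "\<And>x. x \<in> {u..v} \<Longrightarrow> \<bar>psi x\<bar> + \<bar>d x\<bar> \<le> M"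
  shows "\<bar>psi v - psi u\<bar> + \<bar>d v - d u\<bar> \<le> (1 + B) * M * (v - u)"
proof -
  have psi_M: "\<bar>psi x\<bar> \<le> M" and d_M: "\<bar>d x\<bar> \<le> M" if "x \<in> {u..v}" for x
    using M[OF that] by linarith+
  have "0 \<le> M"
    using d_M[of u] uv by (smt (verit) atLeastAtMost_iff)
  have "\<bar>psi v - psi u\<bar> \<le> M * (v - u)"
    by (rule has_integral_bound_AE_real[OF \<open>0 \<le> M\<close> uv(2) H2_edge_has_integral[OF H uv]])
      (use d_M in \<open>auto intro: AE_I2\<close>)
  moreover have "\<bar>d v - d u\<bar> \<le> (B * M) * (v - u)"
  proof (rule has_integral_bound_AE_real[OF _ uv(2) H2_edge_deriv_has_integral[OF H uv]])
    show "0 \<le> B * M"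
      using \<open>0 \<le> B\<close> \<open>0 \<le> M\<close> by simp
    show "AE x in lebesgue. x \<in> {u..v} \<longrightarrow> \<bar>g x\<bar> \<le> B * M"
      using g_bound
    proof eventually_elim
      case (elim x)
      show ?case
      proof
        assume "x \<in> {u..v}"
        then have "\<bar>g x\<bar> \<le> B * \<bar>psi x\<bar>" "\<bar>psi x\<bar> \<le> M"
          using elim psi_M uv by auto
        then show "\<bar>g x\<bar> \<le> B * M"
          using \<open>0 \<le> B\<close> by (meson mult_left_mono order_trans)
      qed
    qed
  qed
  moreover have "(1 + B) * M * (v - u) = M * (v - u) + B * M * (v - u)"
    by (simp add: algebra_simps)
  ultimately show ?thesis
    by linarith
qed

lemma H2_edge_vanishes_near:
  assumes H: "H2_edge a psi d g" and "0 \<le> B"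
    and g_bound: "AE x in lebesgue. x \<in> {0..a} \<longrightarrow> \<bar>g x\<bar> \<le> B * \<bar>psi x\<bar>"
    and s: "s \<in> {0..a}" "psi s = 0" "d s = 0"
    and x: "x \<in> {0..a}" "\<bar>x - s\<bar> \<le> 1 / (2 * (1 + B))"
  shows "psi x = 0 \<and> d x = 0"
proof -
  define h where "h = 1 / (2 * (1 + B))"
  define I where "I = {max 0 (s - h)..min a (s + h)}"
  let ?E = "\<lambda>y. \<bar>psi y\<bar> + \<bar>d y\<bar>"
  have "0 < h"
    using \<open>0 \<le> B\<close> by (simp add: h_def)
  then have "s \<in> I" "x \<in> I" "I \<subseteq> {0..a}"
    using s x by (auto simp: I_def h_def abs_le_iff)
  moreover have "continuous_on I ?E"
    using continuous_on_subset[OF H2_edge_continuous_on(1)[OF H] \<open>I \<subseteq> {0..a}\<close>]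
      continuous_on_subset[OF H2_edge_continuous_on(2)[OF H] \<open>I \<subseteq> {0..a}\<close>]
    by (intro continuous_intros)
  moreover have "compact I"
    by (simp add: I_def)
  ultimately obtain x0 where x0: "x0 \<in> I" and max: "\<And>y. y \<in> I \<Longrightarrow> ?E y \<le> ?E x0"
    using continuous_attains_sup[of I ?E] by blast
  \<comment> \<open>On I the maximum of |psi| + |d| is at most half of itself, by the increment bound from s.\<close>
  have "?E x0 \<le> (1 + B) * ?E x0 * \<bar>x0 - s\<bar>"
  proof (cases "s \<le> x0")
    case True
    then have "{s..x0} \<subseteq> I"
      using \<open>s \<in> I\<close> x0 by (auto simp: I_def)
    moreover have "0 \<le> s" "x0 \<le> a"
      using s x0 \<open>I \<subseteq> {0..a}\<close> by auto
    ultimately have "\<bar>psi x0 - psi s\<bar> + \<bar>d x0 - d s\<bar> \<le> (1 + B) * ?E x0 * (x0 - s)"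
      using True max by (intro H2_edge_increment_bound[OF H \<open>0 \<le> B\<close> g_bound]) auto
    then show ?thesis
      using True s by simp
  next
    case False
    then have "{x0..s} \<subseteq> I"
      using \<open>s \<in> I\<close> x0 by (auto simp: I_def)
    moreover have "0 \<le> x0" "s \<le> a"
      using s x0 \<open>I \<subseteq> {0..a}\<close> by auto
    ultimately have "\<bar>psi s - psi x0\<bar> + \<bar>d s - d x0\<bar> \<le> (1 + B) * ?E x0 * (s - x0)"
      using False max by (intro H2_edge_increment_bound[OF H \<open>0 \<le> B\<close> g_bound]) auto
    then show ?thesis
      using False s by simp
  qed
  also have "\<dots> \<le> (1 + B) * ?E x0 * h"
    using x0 \<open>0 \<le> B\<close> by (intro mult_left_mono) (auto simp: I_def)
  also have "\<dots> = ((1 + B) * h) * ?E x0"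
    by (simp only: ac_simps)
  also have "(1 + B) * h = 1 / 2"
    using \<open>0 \<le> B\<close> by (simp add: h_def)
  finally have "?E x0 \<le> 1 / 2 * ?E x0" .
  then have "?E x0 \<le> 0"
    by simp
  then have "\<bar>psi x\<bar> + \<bar>d x\<bar> \<le> 0"
    using max[OF \<open>x \<in> I\<close>] by linarith
  then have "\<bar>psi x\<bar> = 0" "\<bar>d x\<bar> = 0"
    using abs_ge_zero[of "psi x"] abs_ge_zero[of "d x"] by linarith+
  then show ?thesis
    by simp
qed

lemma H2_edge_cauchy_unique:
  assumes H: "H2_edge a psi d g" and "0 \<le> B"
    and g_bound: "AE x in lebesgue. x \<in> {0..a} \<longrightarrow> \<bar>g x\<bar> \<le> B * \<bar>psi x\<bar>"
    and t: "t \<in> {0..a}" "psi t = 0" "d t = 0" and x: "x \<in> {0..a}"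
  shows "psi x = 0 \<and> d x = 0"
proof -
  define Z where "Z = {y \<in> {0..a}. (psi y, d y) = (0, 0)}"
  have "openin (top_of_set {0..a}) Z"
    unfolding openin_euclidean_subtopology_iff
  proof (intro conjI ballI)
    show "Z \<subseteq> {0..a}"
      by (auto simp: Z_def)
    fix s assume "s \<in> Z"
    then have s: "s \<in> {0..a}" "psi s = 0" "d s = 0"
      by (simp_all add: Z_def)
    show "\<exists>e>0. \<forall>y\<in>{0..a}. dist y s < e \<longrightarrow> y \<in> Z"
    proof (intro exI conjI ballI impI)
      show "0 < 1 / (2 * (1 + B))"
        using \<open>0 \<le> B\<close> by simp
      fix y assume y: "y \<in> {0..a}" "dist y s < 1 / (2 * (1 + B))"
      then have "\<bar>y - s\<bar> \<le> 1 / (2 * (1 + B))"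
        by (simp add: dist_real_def)
      with y(1) have "psi y = 0 \<and> d y = 0"
        by (rule H2_edge_vanishes_near[OF H \<open>0 \<le> B\<close> g_bound s])
      with y(1) show "y \<in> Z"
        by (simp add: Z_def)
    qed
  qed
  moreover have "closedin (top_of_set {0..a}) Z"
    unfolding Z_def using H2_edge_continuous_on[OF H]
    by (intro continuous_closedin_preimage_constant continuous_on_Pair)
  ultimately have "Z = {} \<or> Z = {0..a}"
    using connected_Icc[of 0 a, unfolded connected_clopen] by blast
  moreover have "t \<in> Z"
    using t by (simp add: Z_def)
  ultimately have "x \<in> Z"
    using x by blast
  then show ?thesis
    by (simp add: Z_def)
qed

lemma edge_sol_cauchy_unique:
  assumes sol: "edge_sol q a psi d"
    and q_bdd: "\<exists>B. AE x in lebesgue. x \<in> {0..a} \<longrightarrow> \<bar>q x\<bar> \<le> B"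
    and t: "t \<in> {0..a}" "psi t = 0" "d t = 0" and x: "x \<in> {0..a}"
  shows "psi x = 0"
proof -
  obtain g where H: "H2_edge a psi d g" and eq: "AE x in lebesgue. x \<in> {0..a} \<longrightarrow> - g x + q x * psi x = 0"
    using sol unfolding edge_sol_def by blast
  obtain B where B: "AE x in lebesgue. x \<in> {0..a} \<longrightarrow> \<bar>q x\<bar> \<le> B"
    using q_bdd by blast
  from eq B have "AE x in lebesgue. x \<in> {0..a} \<longrightarrow> \<bar>g x\<bar> \<le> max B 0 * \<bar>psi x\<bar>"
  proof eventually_elim
    case (elim x)
    show ?case
    proof
      assume "x \<in> {0..a}"
      with elim have "g x = q x * psi x" "\<bar>q x\<bar> \<le> B"
        by auto
      then have "\<bar>g x\<bar> = \<bar>q x\<bar> * \<bar>psi x\<bar>"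
        by (simp add: abs_mult)
      also have "\<dots> \<le> max B 0 * \<bar>psi x\<bar>"
        using \<open>\<bar>q x\<bar> \<le> B\<close> by (intro mult_right_mono) auto
      finally show "\<bar>g x\<bar> \<le> max B 0 * \<bar>psi x\<bar>" .
    qed
  qed
  then show ?thesis
    using H2_edge_cauchy_unique[OF H max.cobounded2 _ t x] by blast
qed

lemma edge_sol_zero: "edge_sol q a (\<lambda>x. 0) (\<lambda>x. 0)"
  unfolding edge_sol_def H2_edge_def by (intro exI[of _ "\<lambda>x. 0"]) auto

lemma edge_sol_cmult:
  assumes "edge_sol q a psi d"
  shows "edge_sol q a (\<lambda>x. c * psi x) (\<lambda>x. c * d x)"
proof -
  obtain g where "H2_edge a psi d g" and eq: "AE x in lebesgue. x \<in> {0..a} \<longrightarrow> - g x + q x * psi x = 0"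
    using assms unfolding edge_sol_def by blast
  moreover from eq have "AE x in lebesgue. x \<in> {0..a} \<longrightarrow> - (c * g x) + q x * (c * psi x) = 0"
    by eventually_elim (simp add: algebra_simps)
  ultimately show ?thesis
    unfolding edge_sol_def by (blast intro: H2_edge_cmult)
qed

lemma edge_sol_add:
  assumes "edge_sol q a psi1 d1" "edge_sol q a psi2 d2"
  shows "edge_sol q a (\<lambda>x. psi1 x + psi2 x) (\<lambda>x. d1 x + d2 x)"
proof -
  obtain g1 g2 where "H2_edge a psi1 d1 g1" "H2_edge a psi2 d2 g2"
    and eq: "AE x in lebesgue. x \<in> {0..a} \<longrightarrow> - g1 x + q x * psi1 x = 0"
      "AE x in lebesgue. x \<in> {0..a} \<longrightarrow> - g2 x + q x * psi2 x = 0"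
    using assms unfolding edge_sol_def by blast
  moreover from eq have "AE x in lebesgue. x \<in> {0..a} \<longrightarrow> - (g1 x + g2 x) + q x * (psi1 x + psi2 x) = 0"
    by eventually_elim (simp add: algebra_simps)
  ultimately show ?thesis
    unfolding edge_sol_def by (blast intro: H2_edge_add)
qed

lemma edge_sol_lincomb:
  assumes "finite K" "\<And>k. k \<in> K \<Longrightarrow> edge_sol q a (psi k) (d k)"
  shows "edge_sol q a (\<lambda>x. \<Sum>k\<in>K. c k * psi k x) (\<lambda>x. \<Sum>k\<in>K. c k * d k x)"
  using assms
proof (induction K rule: finite_induct)
  case empty
  then show ?case
    using edge_sol_zero by simp
next
  case (insert k K)
  have "edge_sol q a (\<lambda>x. c k * psi k x + (\<Sum>k\<in>K. c k * psi k x)) (\<lambda>x. c k * d k x + (\<Sum>k\<in>K. c k * d k x))"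
    using insert.prems by (intro edge_sol_add[OF edge_sol_cmult insert.IH]) auto
  with insert.hyps show ?case
    by simp
qed

lemma edge_dirichlet_neumann_normalized:
  assumes "edge_dirichlet_neumann_nontrivial q a"
    and q_bdd: "\<exists>B. AE x in lebesgue. x \<in> {0..a} \<longrightarrow> \<bar>q x\<bar> \<le> B"
  obtains z dz where "edge_sol q a z dz" "z 0 = 0" "dz a = 0" "dz 0 = 1" "\<exists>x\<in>{0..a}. z x \<noteq> 0"
proof -
  obtain z dz x where sol: "edge_sol q a z dz" "z 0 = 0" "dz a = 0" and x: "x \<in> {0..a}" "z x \<noteq> 0"
    using assms(1) unfolding edge_dirichlet_neumann_nontrivial_def by blast
  have "dz 0 \<noteq> 0"
    using edge_sol_cauchy_unique[OF sol(1) q_bdd _ sol(2) _ x(1)] x by auto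
  show ?thesis
  proof (rule that[OF edge_sol_cmult[OF sol(1), of "1 / dz 0"]])
    show "\<exists>y\<in>{0..a}. 1 / dz 0 * z y \<noteq> 0"
      using x \<open>dz 0 \<noteq> 0\<close> by auto
  qed (use sol \<open>dz 0 \<noteq> 0\<close> in simp_all)
qed

lemma neumann_sol_vanishes_at_centre:
  assumes "edge_dirichlet_neumann_nontrivial q a"
    and q_bdd: "\<exists>B. AE x in lebesgue. x \<in> {0..a} \<longrightarrow> \<bar>q x\<bar> \<le> B"
    and sol: "edge_sol q a psi d" "d a = 0"
  shows "psi 0 = 0"
proof -
  obtain z dz x where z: "edge_sol q a z dz" "z 0 = 0" "dz a = 0" and x: "x \<in> {0..a}" "z x \<noteq> 0"
    using assms(1) unfolding edge_dirichlet_neumann_nontrivial_def by blast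
  have "a \<in> {0..a}" "0 \<in> {0..a}"
    using x by auto
  have "z a \<noteq> 0"
    using edge_sol_cauchy_unique[OF z(1) q_bdd \<open>a \<in> {0..a}\<close> _ z(3) x(1)] x by auto
  \<comment> \<open>The Wronskian-type combination below has zero Cauchy data at the free endpoint a.\<close>
  have "edge_sol q a (\<lambda>y. z a * psi y + (- psi a) * z y) (\<lambda>y. z a * d y + (- psi a) * dz y)"
    by (intro edge_sol_add edge_sol_cmult sol z)
  then have "z a * psi 0 + (- psi a) * z 0 = 0"
    by (rule edge_sol_cauchy_unique[OF _ q_bdd \<open>a \<in> {0..a}\<close> _ _ \<open>0 \<in> {0..a}\<close>]) (simp_all add: sol z)
  with \<open>z 0 = 0\<close> \<open>z a \<noteq> 0\<close> show ?thesis
    by simp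
qed

lemma edge_sol_deriv_zero_if_not_dirichlet_neumann:
  assumes "\<not> edge_dirichlet_neumann_nontrivial q a"
    and sol: "edge_sol q a psi d" "psi 0 = 0" "d a = 0" and "0 < a"
  shows "d 0 = 0"
proof -
  have zero: "\<And>x. x \<in> {0..a} \<Longrightarrow> psi x = 0"
    using assms(1) sol unfolding edge_dirichlet_neumann_nontrivial_def by blast
  obtain g where H: "H2_edge a psi d g"
    using sol(1) unfolding edge_sol_def by blast
  have "0 \<in> {0..a}"
    using \<open>0 < a\<close> by simp
  have "((\<lambda>x. 0) has_real_derivative d 0) (at 0 within {0..a})"
    by (rule has_field_derivative_transform_within[OF H2_edge_has_derivative[OF H \<open>0 \<in> {0..a}\<close>] zero_less_one])
      (use \<open>0 \<in> {0..a}\<close> zero in auto)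
  moreover have "at 0 within {0..a} \<noteq> (bot :: real filter)"
    using \<open>0 < a\<close> by (simp add: at_within_Icc_at_right)
  ultimately show ?thesis
    using has_field_derivative_unique[of "\<lambda>x. 0" "d 0" 0 "{0..a}" 0] by simp
qed

definition graph_sol_with_deriv :: "nat \<Rightarrow> (nat \<Rightarrow> real) \<Rightarrow> (nat \<Rightarrow> real \<Rightarrow> real) \<Rightarrow>
    (nat \<Rightarrow> real \<Rightarrow> real) \<Rightarrow> (nat \<Rightarrow> real \<Rightarrow> real) \<Rightarrow> bool"
  where
  "graph_sol_with_deriv n a Q psi d \<longleftrightarrow>
     (\<forall>i<n. edge_sol (Q i) (a i) (psi i) (d i)) \<and>
     (\<forall>i<n. \<forall>j<n. psi i 0 = psi j 0) \<and>
     (\<Sum>i<n. d i 0) = 0 \<and>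
     (\<forall>i<n. d i (a i) = 0)"

lemma graph_sol_iff: "graph_sol n a Q psi \<longleftrightarrow> (\<exists>d. graph_sol_with_deriv n a Q psi d)"
  by (simp add: graph_sol_def graph_sol_with_deriv_def)

lemma graph_sol_with_derivI:
  assumes "\<And>i. i < n \<Longrightarrow> edge_sol (Q i) (a i) (psi i) (d i)" "\<And>i. i < n \<Longrightarrow> psi i 0 = psi 0 0"
    "(\<Sum>i<n. d i 0) = 0" "\<And>i. i < n \<Longrightarrow> d i (a i) = 0"
  shows "graph_sol_with_deriv n a Q psi d"
  using assms unfolding graph_sol_with_deriv_def by metis

lemma graph_sol_with_derivD:
  assumes "graph_sol_with_deriv n a Q psi d"
  shows "\<And>i. i < n \<Longrightarrow> edge_sol (Q i) (a i) (psi i) (d i)" "\<And>i. i < n \<Longrightarrow> psi i 0 = psi 0 0"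
    "(\<Sum>i<n. d i 0) = 0" "\<And>i. i < n \<Longrightarrow> d i (a i) = 0"
  using assms unfolding graph_sol_with_deriv_def by (metis gr_zeroI less_zeroE)+

lemma graph_sol_with_deriv_lincomb:
  assumes "finite K" and sols: "\<And>k. k \<in> K \<Longrightarrow> graph_sol_with_deriv n a Q (psi k) (d k)"
  shows "graph_sol_with_deriv n a Q (\<lambda>i x. \<Sum>k\<in>K. c k * psi k i x) (\<lambda>i x. \<Sum>k\<in>K. c k * d k i x)"
proof (rule graph_sol_with_derivI)
  fix i assume "i < n"
  show "edge_sol (Q i) (a i) (\<lambda>x. \<Sum>k\<in>K. c k * psi k i x) (\<lambda>x. \<Sum>k\<in>K. c k * d k i x)"
    using graph_sol_with_derivD(1)[OF sols \<open>i < n\<close>] by (rule edge_sol_lincomb[OF \<open>finite K\<close>])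
  show "(\<Sum>k\<in>K. c k * psi k i 0) = (\<Sum>k\<in>K. c k * psi k 0 0)"
    using graph_sol_with_derivD(2)[OF sols \<open>i < n\<close>] by (intro sum.cong) simp_all
  show "(\<Sum>k\<in>K. c k * d k i (a i)) = 0"
    using graph_sol_with_derivD(4)[OF sols \<open>i < n\<close>] by (intro sum.neutral) simp
next
  have "(\<Sum>i<n. \<Sum>k\<in>K. c k * d k i 0) = (\<Sum>k\<in>K. c k * (\<Sum>i<n. d k i 0))"
    by (subst sum.swap) (simp only: sum_distrib_left)
  also have "\<dots> = 0"
    using graph_sol_with_derivD(3)[OF sols] by simp
  finally show "(\<Sum>i<n. \<Sum>k\<in>K. c k * d k i 0) = 0" .
qed

lemma graph_sol_with_deriv_centre_zero:
  assumes sol: "graph_sol_with_deriv n a Q psi d"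
    and i0: "i0 < n" "edge_dirichlet_neumann_nontrivial (Q i0) (a i0)"
    and Q_bdd: "\<exists>B. AE x in lebesgue. x \<in> {0..a i0} \<longrightarrow> \<bar>Q i0 x\<bar> \<le> B"
    and "i < n"
  shows "psi i 0 = 0"
proof -
  have "psi i0 0 = 0"
    using i0(2) Q_bdd graph_sol_with_derivD(1,4)[OF sol i0(1)] by (rule neumann_sol_vanishes_at_centre)
  then show ?thesis
    using graph_sol_with_derivD(2)[OF sol] i0(1) \<open>i < n\<close> by metis
qed

lemma graph_sol_with_deriv_vanishes:
  assumes sol: "graph_sol_with_deriv n a Q psi d"
    and a_pos: "\<And>i. i < n \<Longrightarrow> a i > 0"
    and Q_bdd: "\<And>i. i < n \<Longrightarrow> \<exists>B. AE x in lebesgue. x \<in> {0..a i} \<longrightarrow> \<bar>Q i x\<bar> \<le> B"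
    and centre: "\<And>i. i < n \<Longrightarrow> psi i 0 = 0"
    and deriv: "\<And>i. i < n \<Longrightarrow> i \<noteq> i0 \<Longrightarrow> edge_dirichlet_neumann_nontrivial (Q i) (a i) \<Longrightarrow> d i 0 = 0"
    and i: "i < n" "x \<in> {0..a i}"
  shows "psi i x = 0"
proof -
  note edge = graph_sol_with_derivD(1,4)[OF sol]
  have others: "d j 0 = 0" if "j < n" "j \<noteq> i0" for j
  proof (cases "edge_dirichlet_neumann_nontrivial (Q j) (a j)")
    case True
    then show ?thesis
      using deriv that by blast
  next
    case False
    then show ?thesis
      using edge(1)[OF \<open>j < n\<close>] centre[OF \<open>j < n\<close>] edge(2)[OF \<open>j < n\<close>] a_pos[OF \<open>j < n\<close>]
      by (rule edge_sol_deriv_zero_if_not_dirichlet_neumann)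
  qed
  \<comment> \<open>The remaining derivative is forced by the Kirchhoff sum condition.\<close>
  have "d i 0 = 0"
  proof (cases "i = i0")
    case True
    have "0 = (\<Sum>l<n. d l 0)"
      using graph_sol_with_derivD(3)[OF sol] by simp
    also have "\<dots> = d i 0 + (\<Sum>l\<in>{..<n} - {i}. d l 0)"
      using \<open>i < n\<close> by (simp add: sum.remove)
    also have "(\<Sum>l\<in>{..<n} - {i}. d l 0) = 0"
      using others True by (intro sum.neutral) auto
    finally show ?thesis
      by simp
  qed (use others i in blast)
  moreover have "0 \<in> {0..a i}"
    using a_pos[OF i(1)] by simp
  ultimately show ?thesis
    using edge_sol_cauchy_unique[OF edge(1)[OF i(1)] Q_bdd[OF i(1)] _ centre[OF i(1)] _ i(2)] by blast
qed

lemma graph_sol_with_deriv_dirichlet_neumann_pair: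
  assumes "i < n" "j < n" "i \<noteq> j"
    and zi: "edge_sol (Q i) (a i) zi di" "zi 0 = 0" "di (a i) = 0" "di 0 = 1"
    and zj: "edge_sol (Q j) (a j) zj dj" "zj 0 = 0" "dj (a j) = 0" "dj 0 = 1"
  shows "graph_sol_with_deriv n a Q (\<lambda>l x. if l = i then zi x else if l = j then - zj x else 0)
    (\<lambda>l x. if l = i then di x else if l = j then - dj x else 0)"
proof (rule graph_sol_with_derivI)
  have "edge_sol (Q j) (a j) (\<lambda>x. - zj x) (\<lambda>x. - dj x)"
    using edge_sol_cmult[OF zj(1), of "-1"] by simp
  then show "edge_sol (Q l) (a l) (\<lambda>x. if l = i then zi x else if l = j then - zj x else 0)
      (\<lambda>x. if l = i then di x else if l = j then - dj x else 0)" for l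
    using zi(1) edge_sol_zero[of "Q l" "a l"] by (cases "l = i"; cases "l = j") simp_all
  have "(\<Sum>l<n. if l = i then di 0 else if l = j then - dj 0 else 0)
      = (\<Sum>l<n. (if l = i then 1 else 0) - (if l = j then 1 else 0))"
    using \<open>i \<noteq> j\<close> zi(4) zj(4) by (intro sum.cong) auto
  also have "\<dots> = 0"
    using \<open>i < n\<close> \<open>j < n\<close> by (simp add: sum_subtractf)
  finally show "(\<Sum>l<n. if l = i then di 0 else if l = j then - dj 0 else 0) = 0" .
qed (use zi(2,3) zj(2,3) in auto)

lemma dirichlet_neumann_edges_imp_graph_sols:
  fixes a :: "nat \<Rightarrow> real" and Q :: "nat \<Rightarrow> real \<Rightarrow> real"
  assumes Q_bdd: "\<And>i. i < n \<Longrightarrow> \<exists>B. AE x in lebesgue. x \<in> {0..a i} \<longrightarrow> \<bar>Q i x\<bar> \<le> B"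
    and card: "m + 1 \<le> card {i. i < n \<and> edge_dirichlet_neumann_nontrivial (Q i) (a i)}"
  shows "\<exists>psi. (\<forall>k<m. graph_sol n a Q (psi k)) \<and> graph_lin_indep n a m psi"
proof -
  define S where "S = {i. i < n \<and> edge_dirichlet_neumann_nontrivial (Q i) (a i)}"
  have "card {..m} \<le> card S"
    using card by (simp add: S_def)
  then obtain e where e: "e ` {..m} \<subseteq> S" "inj_on e {..m}"
    using card_le_inj[of "{..m}" S] by (auto simp: S_def)
  have "\<exists>z dz. edge_sol (Q i) (a i) z dz \<and> z 0 = 0 \<and> dz (a i) = 0 \<and> dz 0 = 1 \<and> (\<exists>x\<in>{0..a i}. z x \<noteq> 0)"
    if "i \<in> S" for i
  proof -
    from that have "edge_dirichlet_neumann_nontrivial (Q i) (a i)" "i < n"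
      by (simp_all add: S_def)
    then obtain z dz where "edge_sol (Q i) (a i) z dz" "z 0 = 0" "dz (a i) = 0" "dz 0 = 1"
        "\<exists>x\<in>{0..a i}. z x \<noteq> 0"
      by (rule edge_dirichlet_neumann_normalized[OF _ Q_bdd])
    then show ?thesis
      by blast
  qed
  then obtain z dz where z: "\<And>i. i \<in> S \<Longrightarrow> edge_sol (Q i) (a i) (z i) (dz i) \<and> z i 0 = 0
      \<and> dz i (a i) = 0 \<and> dz i 0 = 1 \<and> (\<exists>x\<in>{0..a i}. z i x \<noteq> 0)"
    by metis
  have e_S: "e k \<in> S" "e k < n" if "k \<le> m" for k
    using e(1) that by (auto simp: S_def)
  have e_eq: "e k = e l \<longleftrightarrow> k = l" if "k \<le> m" "l \<le> m" for k l
    using inj_on_eq_iff[OF e(2)] that by auto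
  define psi where "psi k l x = (if l = e k then z (e k) x else if l = e m then - z (e m) x else 0)" for k l x
  have "graph_sol n a Q (psi k)" if "k < m" for k
    unfolding graph_sol_iff psi_def
    by (rule exI[of _ "\<lambda>l x. if l = e k then dz (e k) x else if l = e m then - dz (e m) x else 0"],
        rule graph_sol_with_deriv_dirichlet_neumann_pair) (use z[OF e_S(1)] e_S(2) e_eq that in auto)
  moreover have "graph_lin_indep n a m psi"
    unfolding graph_lin_indep_def
  proof (intro allI impI)
    fix c :: "nat \<Rightarrow> real" and k0
    assume zero: "\<forall>i<n. \<forall>x\<in>{0..a i}. (\<Sum>k<m. c k * psi k i x) = 0" and "k0 < m"
    have "\<exists>x\<in>{0..a (e k0)}. z (e k0) x \<noteq> 0"
      using z[OF e_S(1)[of k0]] \<open>k0 < m\<close> by simp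
    then obtain x0 where x0: "x0 \<in> {0..a (e k0)}" "z (e k0) x0 \<noteq> 0" ..
    have "psi k (e k0) x0 = (if k = k0 then z (e k0) x0 else 0)" if "k < m" for k
      using e_eq that \<open>k0 < m\<close> by (auto simp: psi_def)
    then have "(\<Sum>k<m. c k * psi k (e k0) x0) = (\<Sum>k<m. if k = k0 then c k0 * z (e k0) x0 else 0)"
      by (intro sum.cong) auto
    also have "\<dots> = c k0 * z (e k0) x0"
      using \<open>k0 < m\<close> by simp
    finally have "(\<Sum>k<m. c k * psi k (e k0) x0) = c k0 * z (e k0) x0" .
    then show "c k0 = 0"
      using zero x0 e_S(2) \<open>k0 < m\<close> by auto
  qed
  ultimately show ?thesis
    by blast
qed

lemma graph_sol_lincomb_vanishes:
  fixes m :: nat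
  assumes a_pos: "\<And>i. i < n \<Longrightarrow> a i > 0"
    and Q_bdd: "\<And>i. i < n \<Longrightarrow> \<exists>B. AE x in lebesgue. x \<in> {0..a i} \<longrightarrow> \<bar>Q i x\<bar> \<le> B"
    and d: "\<And>k. k < m \<Longrightarrow> graph_sol_with_deriv n a Q (psi k) (d k)"
    and centre: "(\<Sum>k<m. c k * psi k 0 0) = 0"
    and deriv: "\<And>i. i < n \<Longrightarrow> i \<noteq> i0 \<Longrightarrow> edge_dirichlet_neumann_nontrivial (Q i) (a i) \<Longrightarrow>
      (\<Sum>k<m. c k * d k i 0) = 0"
    and i: "i < n" "x \<in> {0..a i}"
  shows "(\<Sum>k<m. c k * psi k i x) = 0"
proof -
  define phi where "phi i x = (\<Sum>k<m. c k * psi k i x)" for i x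
  have phi_sol: "graph_sol_with_deriv n a Q phi (\<lambda>i x. \<Sum>k<m. c k * d k i x)"
    unfolding phi_def using d by (intro graph_sol_with_deriv_lincomb) auto
  have phi_centre: "phi j 0 = 0" if "j < n" for j
    using graph_sol_with_derivD(2)[OF phi_sol that] centre by (simp add: phi_def)
  have "phi i x = 0"
    using phi_sol a_pos Q_bdd phi_centre deriv i by (rule graph_sol_with_deriv_vanishes)
  then show ?thesis
    by (simp add: phi_def)
qed

lemma graph_sols_indep_imp_dirichlet_neumann_edges:
  fixes a :: "nat \<Rightarrow> real" and Q :: "nat \<Rightarrow> real \<Rightarrow> real"
  assumes a_pos: "\<And>i. i < n \<Longrightarrow> a i > 0"
    and Q_bdd: "\<And>i. i < n \<Longrightarrow> \<exists>B. AE x in lebesgue. x \<in> {0..a i} \<longrightarrow> \<bar>Q i x\<bar> \<le> B"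
    and "2 \<le> m" and sols: "\<forall>k<m. graph_sol n a Q (psi k)" and indep: "graph_lin_indep n a m psi"
  shows "m + 1 \<le> card {i. i < n \<and> edge_dirichlet_neumann_nontrivial (Q i) (a i)}"
proof (rule ccontr)
  define S where "S = {i. i < n \<and> edge_dirichlet_neumann_nontrivial (Q i) (a i)}"
  assume "\<not> m + 1 \<le> card {i. i < n \<and> edge_dirichlet_neumann_nontrivial (Q i) (a i)}"
  then have "card S \<le> m"
    by (simp add: S_def)
  have "finite S"
    by (simp add: S_def)
  obtain d where d: "\<And>k. k < m \<Longrightarrow> graph_sol_with_deriv n a Q (psi k) (d k)"
    using sols unfolding graph_sol_iff by metis
  obtain i0 where i0: "S \<noteq> {} \<Longrightarrow> i0 \<in> S"
    by blast
  \<comment> \<open>Fewer than m linear conditions on the coefficients: the centre value if no edge is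
    Dirichlet-Neumann, and otherwise the centre derivatives on the Dirichlet-Neumann edges other
    than i0 (the centre value then vanishes for every solution).\<close>
  obtain c where c_nz: "\<exists>k<m. c k \<noteq> 0" and c_centre: "(\<Sum>k<m. c k * psi k 0 0) = 0"
    and c_deriv: "\<And>i. i \<in> S - {i0} \<Longrightarrow> (\<Sum>k<m. c k * d k i 0) = 0"
  proof (cases "S = {}")
    case True
    obtain c where "\<exists>k\<in>{..<m}. c k \<noteq> 0" "(\<Sum>k<m. c k * psi k 0 0) = 0"
      using homogeneous_system_nontrivial_solution[of "{\<lambda>k. psi k 0 0}" "{..<m}"] \<open>2 \<le> m\<close> by auto
    with True show ?thesis
      using that by blast
  next
    case False
    have "card ((\<lambda>i k. d k i 0) ` (S - {i0})) \<le> card (S - {i0})"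
      using \<open>finite S\<close> by (intro card_image_le) simp
    also have "\<dots> < m"
    proof -
      have "0 < card S"
        using \<open>finite S\<close> False by (simp add: card_gt_0_iff)
      then show ?thesis
        using \<open>card S \<le> m\<close> i0 False by (simp add: card_Diff_singleton)
    qed
    finally obtain c where "\<exists>k\<in>{..<m}. c k \<noteq> 0" "\<And>i. i \<in> S - {i0} \<Longrightarrow> (\<Sum>k<m. c k * d k i 0) = 0"
      using homogeneous_system_nontrivial_solution[of "(\<lambda>i k. d k i 0) ` (S - {i0})" "{..<m}"]
      by (auto simp: S_def)
    moreover have "psi k 0 0 = 0" if "k < m" for k
      using i0 False graph_sol_with_deriv_centre_zero[OF d[OF that], of i0 0] Q_bdd by (auto simp: S_def)
    ultimately show ?thesis
      using that by auto
  qed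
  have "(\<Sum>k<m. c k * psi k i x) = 0" if "i < n" "x \<in> {0..a i}" for i x
    by (rule graph_sol_lincomb_vanishes[OF a_pos Q_bdd d c_centre _ that]) (use c_deriv in \<open>auto simp: S_def\<close>)
  then have "\<forall>k<m. c k = 0"
    using indep unfolding graph_lin_indep_def by blast
  with c_nz show False
    by blast
qed

theorem proposition1:
  fixes n m :: nat and a :: "nat \<Rightarrow> real" and Q :: "nat \<Rightarrow> real \<Rightarrow> real"
  assumes a_pos: "\<And>i. i < n \<Longrightarrow> a i > 0"
    and Q_meas: "\<And>i. i < n \<Longrightarrow> set_borel_measurable lebesgue {0..a i} (Q i)"
    and Q_bdd: "\<And>i. i < n \<Longrightarrow> \<exists>B. AE x in lebesgue. x \<in> {0..a i} \<longrightarrow> \<bar>Q i x\<bar> \<le> B"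
    and m_ge: "m \<ge> 2"
  shows "(\<exists>psi :: nat \<Rightarrow> nat \<Rightarrow> real \<Rightarrow> real.
            (\<forall>k<m. graph_sol n a Q (psi k)) \<and> graph_lin_indep n a m psi)
         \<longleftrightarrow> m + 1 \<le> card {i. i < n \<and> edge_dirichlet_neumann_nontrivial (Q i) (a i)}"
  using graph_sols_indep_imp_dirichlet_neumann_edges[where n = n and a = a and Q = Q, OF a_pos Q_bdd m_ge]
    dirichlet_neumann_edges_imp_graph_sols[where n = n and a = a and Q = Q, OF Q_bdd]
  by blast

end
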